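(* Let $n\geqslant2$ and $r_1, \ldots , r_n$ be positive integers with $r_1<r_2<\cdots<r_n$. Then $$\varphi\big(C(r_1, \ldots, r_n)\big)=\varphi^{r_n-r_{n-1}}\big(C(r_1, \ldots, r_{n-1})\big)\varphi\big(C(r_1, \ldots, r_{n-2})\big)\frac{x^2-r_n}{x^2-r_{n-1}}.$$
   Context: For a graph $G$, $\varphi(G;x)$ (abbreviated $\varphi(G)$) denotes the characteristic polynomial of its adjacency matrix. For rooted trees $T_1,T_2$ with disjoint vertex sets and a positive integer $n$, $T_1\sim nT_2$ denotes the rooted tree obtained from $T_1$ and $n$ copies of $T_2$ by joining the root of $T_1$ to the roots of the copies of $T_2$; the root of $T_1$ is the root of the result. For positive integers $r_1<\cdots<r_n$, the rooted tree $C(r_1,\ldots,r_n)$ is defined recursively by $C(r_1,\ldots,r_n)=C(r_1,\ldots,r_{n-2})\sim (r_n-r_{n-1})C(r_1,\ldots,r_{n-1})$ for $n\geqslant2$, where $C(\,)$ is the one-vertex tree and $C(r_1)$ is the star on $r_1+1$ vertices rooted at its center. *)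

theory Defs
  imports "Jordan_Normal_Form.Char_Poly"
begin

datatype rtree = Node "rtree list"

fun tsize :: "rtree \<Rightarrow> nat" where
  "tsize (Node ts) = Suc (sum_list (map tsize ts))"

text \<open>Vertices are numbered in preorder: the root is 0 and the subtrees of the root
  occupy consecutive blocks starting at 1. fedges off ts gives the edges from the
  root 0 to the roots of the subtrees ts (whose block starts at off), together with
  the edges inside these subtrees. Edges are ordered pairs (parent, child).\<close>
fun tedges :: "rtree \<Rightarrow> (nat \<times> nat) set"
and fedges :: "nat \<Rightarrow> rtree list \<Rightarrow> (nat \<times> nat) set" where
  "tedges (Node ts) = fedges 1 ts"
| "fedges off [] = {}"
| "fedges off (t # ts) =
     insert (0, off) ((\<lambda>(a,b). (a + off, b + off)) ` tedges t) \<union> fedges (off + tsize t) ts"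

definition adj_mat :: "rtree \<Rightarrow> int mat" where
  "adj_mat T = mat (tsize T) (tsize T)
     (\<lambda>(i,j). if (i,j) \<in> tedges T \<or> (j,i) \<in> tedges T then 1 else 0)"

definition phi :: "rtree \<Rightarrow> int poly" where
  "phi T = char_poly (adj_mat T)"

text \<open>T1 ~ n T2: join the root of T1 to the roots of n copies of T2.\<close>
fun tjoin :: "rtree \<Rightarrow> nat \<Rightarrow> rtree \<Rightarrow> rtree" where
  "tjoin (Node ts) n T2 = Node (ts @ replicate n T2)"

text \<open>C on the reversed list of parameters (last parameter first).\<close>
fun Crev :: "nat list \<Rightarrow> rtree" where
  "Crev [] = Node []"
| "Crev [r] = Node (replicate r (Node []))"
| "Crev (a # b # rest) = tjoin (Crev rest) (a - b) (Crev (b # rest))"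

definition C :: "nat list \<Rightarrow> rtree" where
  "C rs = Crev (rev rs)"

end

theory Submission
  imports Defs
begin

text \<open>Joining the roots of two trees T and S by an edge and expanding the determinant along
  that edge gives \<open>\<phi>(T \<sim> S) = \<phi>(T) \<phi>(S) - \<phi>(T - root) \<phi>(S - root)\<close>, while deleting
  the new root leaves \<open>(T - root) \<union> S\<close>. Iterating over m copies of S shows that a relation
  \<open>\<phi>(S) \<phi>(T) = Q \<phi>(S - root) \<phi>(T - root)\<close> passes to the pair \<open>(T \<sim> m S, S)\<close> with Q
  replaced by \<open>Q - m\<close>. Starting from a single vertex, where \<open>Q = x\<^sup>2\<close>, the consecutive trees
  \<open>C(r\<^sub>1, \<dots>, r\<^sub>k)\<close>, \<open>C(r\<^sub>1, \<dots>, r\<^sub>k\<^sub>-\<^sub>1)\<close> therefore satisfy it with \<open>Q = x\<^sup>2 - r\<^sub>k\<close>; using this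
  relation to eliminate the root-deleted polynomials from the formula for \<open>\<phi>(T \<sim> m S)\<close>
  gives the theorem.\<close>

lemma det_row_split:
  fixes A B C :: "'a::comm_ring_1 mat"
  assumes A: "A \<in> carrier_mat n n" and B: "B \<in> carrier_mat n n" and C: "C \<in> carrier_mat n n"
    and k: "k < n"
    and same: "\<And>i j. i < n \<Longrightarrow> j < n \<Longrightarrow> i \<noteq> k \<Longrightarrow> B $$ (i,j) = A $$ (i,j) \<and> C $$ (i,j) = A $$ (i,j)"
    and split: "\<And>j. j < n \<Longrightarrow> A $$ (k,j) = B $$ (k,j) + C $$ (k,j)"
  shows "det A = det B + det C"
proof -
  have "A = mat\<^sub>r n n (\<lambda>i. if i = k then row B i + row C i else row A i)"
    by (rule eq_matI) (use A B C split in auto)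
  moreover have "B = mat\<^sub>r n n (\<lambda>i. if i = k then row B i else row A i)"
    by (rule eq_matI) (use A B C same in auto)
  moreover have "C = mat\<^sub>r n n (\<lambda>i. if i = k then row C i else row A i)"
    by (rule eq_matI) (use A B C same in auto)
  moreover have "det (mat\<^sub>r n n (\<lambda>i. if i = k then row B i + row C i else row A i)) =
      det (mat\<^sub>r n n (\<lambda>i. if i = k then row B i else row A i)) +
      det (mat\<^sub>r n n (\<lambda>i. if i = k then row C i else row A i))"
    by (rule det_row_add) (use A B C k in auto)
  ultimately show ?thesis by metis
qed

lemma det_col_split:
  fixes A B C :: "'a::comm_ring_1 mat"
  assumes A: "A \<in> carrier_mat n n" and B: "B \<in> carrier_mat n n" and C: "C \<in> carrier_mat n n"
    and k: "k < n"
    and same: "\<And>i j. i < n \<Longrightarrow> j < n \<Longrightarrow> j \<noteq> k \<Longrightarrow> B $$ (i,j) = A $$ (i,j) \<and> C $$ (i,j) = A $$ (i,j)"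
    and split: "\<And>i. i < n \<Longrightarrow> A $$ (i,k) = B $$ (i,k) + C $$ (i,k)"
  shows "det A = det B + det C"
proof -
  have "det A\<^sup>T = det B\<^sup>T + det C\<^sup>T"
    by (rule det_row_split[of _ n _ _ k]) (use A B C k same split in auto)
  then show ?thesis using det_transpose A B C by metis
qed

definition corner_mat :: "nat \<Rightarrow> nat \<Rightarrow> 'a::zero \<Rightarrow> 'a mat" where
  "corner_mat m n a = mat m n (\<lambda>(i,j). if i = 0 \<and> j = 0 then a else 0)"

lemma corner_mat_carrier [simp]: "corner_mat m n a \<in> carrier_mat m n"
  by (simp add: corner_mat_def)

lemma det_four_block_corner_mat_zero_cross:
  fixes K P :: "'a::idom mat"
  assumes K: "K \<in> carrier_mat (Suc r) (Suc r)" and P: "P \<in> carrier_mat (Suc s) (Suc s)"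
    and row0: "\<And>j. j < Suc r \<Longrightarrow> K $$ (0,j) = 0" and col0: "\<And>i. i < Suc r \<Longrightarrow> K $$ (i,0) = 0"
  shows "det (four_block_mat K (corner_mat (Suc r) (Suc s) a) (corner_mat (Suc s) (Suc r) b) P)
     = - (a * b * det (mat_delete K 0 0) * det (mat_delete P 0 0))"
proof -
  let ?M = "four_block_mat K (corner_mat (Suc r) (Suc s) a) (corner_mat (Suc s) (Suc r) b) P"
  define D1 where "D1 = mat_delete ?M 0 (Suc r)"
  have M: "?M \<in> carrier_mat (Suc r + Suc s) (Suc r + Suc s)" using K P by auto
  have D1: "D1 \<in> carrier_mat (r + Suc s) (r + Suc s)" using K P by (auto simp: D1_def mat_delete_def)
  have "det ?M = (\<Sum>j<Suc r + Suc s. ?M $$ (0,j) * cofactor ?M 0 j)"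
    by (rule laplace_expansion_row[OF M]) simp
  also have "\<dots> = (\<Sum>j<Suc r + Suc s. if j = Suc r then a * cofactor ?M 0 j else 0)"
    by (rule sum.cong) (use K P row0 in \<open>auto simp: corner_mat_def\<close>)
  finally have expand_row: "det ?M = a * (-1) ^ Suc r * det D1"
    by (simp add: cofactor_def D1_def)
  have "det D1 = (\<Sum>i<r + Suc s. D1 $$ (i,0) * cofactor D1 i 0)"
    by (rule laplace_expansion_column[OF D1]) simp
  also have "\<dots> = (\<Sum>i<r + Suc s. if i = r then b * cofactor D1 i 0 else 0)"
    by (rule sum.cong) (use K P col0 in \<open>auto simp: D1_def mat_delete_def corner_mat_def\<close>)
  finally have expand_col: "det D1 = b * (-1) ^ r * det (mat_delete D1 r 0)"
    by (simp add: cofactor_def)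
  have "mat_delete D1 r 0 = four_block_mat (mat_delete K 0 0) (0\<^sub>m r s) (0\<^sub>m s r) (mat_delete P 0 0)"
    by (rule eq_matI) (use K P in \<open>auto simp: D1_def mat_delete_def corner_mat_def Suc_diff_le\<close>)
  then have "det (mat_delete D1 r 0) = det (mat_delete K 0 0) * det (mat_delete P 0 0)"
    by (simp only:) (rule det_four_block_mat_upper_right_zero, use K P in \<open>auto simp: mat_delete_def\<close>)
  then show ?thesis using expand_row expand_col by (simp add: algebra_simps)
qed

lemma det_four_block_corner_mat:
  fixes K P :: "'a::idom mat"
  assumes K: "K \<in> carrier_mat (Suc r) (Suc r)" and P: "P \<in> carrier_mat (Suc s) (Suc s)"
  shows "det (four_block_mat K (corner_mat (Suc r) (Suc s) a) (corner_mat (Suc s) (Suc r) b) P)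
     = det K * det P - a * b * det (mat_delete K 0 0) * det (mat_delete P 0 0)"
proof -
  let ?U = "corner_mat (Suc r) (Suc s) a" and ?V = "corner_mat (Suc s) (Suc r) b"
  define n where "n = Suc r + Suc s"
  define K' where "K' = mat (Suc r) (Suc r) (\<lambda>(i,j). if i = 0 then 0 else K $$ (i,j))"
  define K'' where "K'' = mat (Suc r) (Suc r) (\<lambda>(i,j). if i = 0 \<or> j = 0 then 0 else K $$ (i,j))"
  have K': "K' \<in> carrier_mat (Suc r) (Suc r)" and K'': "K'' \<in> carrier_mat (Suc r) (Suc r)"
    by (auto simp: K'_def K''_def)
  have "det (four_block_mat K ?U ?V P) =
      det (four_block_mat K (0\<^sub>m (Suc r) (Suc s)) ?V P) + det (four_block_mat K' ?U ?V P)"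
    by (rule det_row_split[of _ n _ _ 0]) (use K K' P in \<open>auto simp: n_def corner_mat_def K'_def\<close>)
  moreover have "det (four_block_mat K (0\<^sub>m (Suc r) (Suc s)) ?V P) = det K * det P"
    by (rule det_four_block_mat_upper_right_zero[OF K refl _ P]) simp
  moreover have "det (four_block_mat K' ?U ?V P) =
      det (four_block_mat K' ?U (0\<^sub>m (Suc s) (Suc r)) P) + det (four_block_mat K'' ?U ?V P)"
    by (rule det_col_split[of _ n _ _ 0])
      (use K' K'' P in \<open>auto simp: n_def corner_mat_def K'_def K''_def\<close>)
  moreover have "det (four_block_mat K' ?U (0\<^sub>m (Suc s) (Suc r)) P) = 0"
  proof -
    have "det K' = 0" using laplace_expansion_row[OF K', of 0] by (simp add: K'_def)
    then show ?thesis using det_four_block_mat_lower_left_zero[OF K' _ refl P] by simp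
  qed
  moreover have "det (four_block_mat K'' ?U ?V P) = - (a * b * det (mat_delete K 0 0) * det (mat_delete P 0 0))"
  proof -
    have "mat_delete K'' 0 0 = mat_delete K 0 0"
      by (rule eq_matI) (use K in \<open>auto simp: K''_def mat_delete_def\<close>)
    then show ?thesis
      using det_four_block_corner_mat_zero_cross[OF K'' P] by (simp add: K''_def)
  qed
  ultimately show ?thesis by simp
qed

lemma mat_delete_four_block_corner_mat:
  fixes K P :: "'a::zero mat"
  assumes K: "K \<in> carrier_mat (Suc r) (Suc r)" and P: "P \<in> carrier_mat (Suc s) (Suc s)"
  shows "mat_delete (four_block_mat K (corner_mat (Suc r) (Suc s) a) (corner_mat (Suc s) (Suc r) b) P) 0 0
     = four_block_mat (mat_delete K 0 0) (0\<^sub>m r (Suc s)) (0\<^sub>m (Suc s) r) P"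
  by (rule eq_matI) (use K P in \<open>auto simp: mat_delete_def corner_mat_def Suc_diff_le\<close>)

lemma tsize_pos: "tsize t > 0"
  by (cases t) auto

lemma fedges_append:
  "fedges off (xs @ ys) = fedges off xs \<union> fedges (off + sum_list (map tsize xs)) ys"
  by (induction xs arbitrary: off) (auto simp: add.assoc)

lemma tedges_fedges_bound:
  "(a, b) \<in> tedges t \<Longrightarrow> a < tsize t \<and> b < tsize t"
  "(a, b) \<in> fedges off ts \<Longrightarrow> a < off + sum_list (map tsize ts) \<and> b < off + sum_list (map tsize ts)"
proof (induction t and off ts arbitrary: a b and a b rule: tedges_fedges.induct)
  case (3 off t ts)
  then show ?case using tsize_pos[of t] by fastforce
qed auto

lemma tedges_snoc:
  assumes "i < tsize (Node ts) + tsize t" and "j < tsize (Node ts) + tsize t"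
  shows "(i,j) \<in> tedges (Node (ts @ [t])) \<longleftrightarrow>
    (i < tsize (Node ts) \<and> j < tsize (Node ts) \<and> (i,j) \<in> tedges (Node ts)) \<or>
    (i = 0 \<and> j = tsize (Node ts)) \<or>
    (tsize (Node ts) \<le> i \<and> tsize (Node ts) \<le> j \<and> (i - tsize (Node ts), j - tsize (Node ts)) \<in> tedges t)"
  using assms tedges_fedges_bound(2)[of _ _ 1 ts]
  by (auto simp: fedges_append) force+

lemma dim_char_poly_matrix_adj_mat [simp]:
  "dim_row (char_poly_matrix (adj_mat T)) = tsize T"
  "dim_col (char_poly_matrix (adj_mat T)) = tsize T"
  by (simp_all add: char_poly_matrix_def adj_mat_def)

lemma char_poly_matrix_adj_mat_carrier:
  "char_poly_matrix (adj_mat T) \<in> carrier_mat (tsize T) (tsize T)"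
  by (rule carrier_matI) simp_all

lemma char_poly_matrix_adj_mat_entry:
  "i < tsize T \<Longrightarrow> j < tsize T \<Longrightarrow> char_poly_matrix (adj_mat T) $$ (i,j) =
   (if i = j then [:0,1:] else 0) + [:- (if (i,j) \<in> tedges T \<or> (j,i) \<in> tedges T then 1 else 0):]"
  by (simp add: char_poly_matrix_def adj_mat_def)

lemma char_poly_matrix_adj_mat_snoc:
  "char_poly_matrix (adj_mat (Node (ts @ [t]))) =
   four_block_mat (char_poly_matrix (adj_mat (Node ts)))
     (corner_mat (tsize (Node ts)) (tsize t) (-1)) (corner_mat (tsize t) (tsize (Node ts)) (-1))
     (char_poly_matrix (adj_mat t))"
  (is "?L = ?R")
proof (rule eq_matI)
  let ?o = "tsize (Node ts)"
  have size: "tsize (Node (ts @ [t])) = ?o + tsize t" by simp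
  show "dim_row ?L = dim_row ?R" "dim_col ?L = dim_col ?R"
    by (simp_all add: size del: tsize.simps)
  fix i j assume "i < dim_row ?R" and "j < dim_col ?R"
  then have i: "i < ?o + tsize t" and j: "j < ?o + tsize t"
    by (simp_all del: tsize.simps)
  have "?L $$ (i,j) = (if i = j then [:0,1:] else 0) +
      [:- (if (i,j) \<in> tedges (Node (ts @ [t])) \<or> (j,i) \<in> tedges (Node (ts @ [t])) then 1 else 0):]"
    using i j by (intro char_poly_matrix_adj_mat_entry) (simp_all only: size)
  also have "\<dots> = ?R $$ (i,j)"
    using i j tsize_pos[of t] tsize_pos[of "Node ts"]
    by (simp only: tedges_snoc[OF i j] tedges_snoc[OF j i])
      (auto simp: char_poly_matrix_adj_mat_entry corner_mat_def simp del: tsize.simps tedges.simps)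
  finally show "?L $$ (i,j) = ?R $$ (i,j)" .
qed

definition phi_minus_root :: "rtree \<Rightarrow> int poly" where
  "phi_minus_root T = det (mat_delete (char_poly_matrix (adj_mat T)) 0 0)"

lemma phi_leaf: "phi (Node []) = [:0,1:]"
proof -
  have "char_poly_matrix (adj_mat (Node [])) \<in> carrier_mat 1 1"
    using char_poly_matrix_adj_mat_carrier[of "Node []"] by simp
  then show ?thesis
    using char_poly_matrix_adj_mat_entry[of 0 "Node []" 0] by (simp add: phi_def char_poly_def det_single)
qed

lemma phi_minus_root_leaf: "phi_minus_root (Node []) = 1"
proof -
  have "mat_delete (char_poly_matrix (adj_mat (Node []))) 0 0 \<in> carrier_mat 0 0"
    using char_poly_matrix_adj_mat_carrier[of "Node []"] by (simp add: mat_delete_def)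
  then show ?thesis unfolding phi_minus_root_def by (rule det_dim_zero)
qed

lemma phi_snoc: "phi (Node (ts @ [t])) = phi (Node ts) * phi t - phi_minus_root (Node ts) * phi_minus_root t"
proof -
  obtain r where r: "tsize (Node ts) = Suc r" using tsize_pos[of "Node ts"] gr0_implies_Suc by blast
  obtain s where s: "tsize t = Suc s" using tsize_pos[of t] gr0_implies_Suc by blast
  show ?thesis
    unfolding phi_def char_poly_def char_poly_matrix_adj_mat_snoc r s
    using det_four_block_corner_mat[of "char_poly_matrix (adj_mat (Node ts))" r
        "char_poly_matrix (adj_mat t)" s "-1" "-1"]
      char_poly_matrix_adj_mat_carrier[of "Node ts"] char_poly_matrix_adj_mat_carrier[of t] r s
    by (simp add: phi_def char_poly_def phi_minus_root_def del: tsize.simps)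
qed

lemma phi_minus_root_snoc: "phi_minus_root (Node (ts @ [t])) = phi_minus_root (Node ts) * phi t"
proof -
  obtain r where r: "tsize (Node ts) = Suc r" using tsize_pos[of "Node ts"] gr0_implies_Suc by blast
  obtain s where s: "tsize t = Suc s" using tsize_pos[of t] gr0_implies_Suc by blast
  let ?K = "char_poly_matrix (adj_mat (Node ts))" and ?P = "char_poly_matrix (adj_mat t)"
  have K: "?K \<in> carrier_mat (Suc r) (Suc r)" and P: "?P \<in> carrier_mat (Suc s) (Suc s)"
    using char_poly_matrix_adj_mat_carrier[of "Node ts"] char_poly_matrix_adj_mat_carrier[of t] r s
    by (simp_all del: tsize.simps)
  have "phi_minus_root (Node (ts @ [t])) =
      det (four_block_mat (mat_delete ?K 0 0) (0\<^sub>m r (Suc s)) (0\<^sub>m (Suc s) r) ?P)"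
    unfolding phi_minus_root_def char_poly_matrix_adj_mat_snoc r s
      mat_delete_four_block_corner_mat[OF K P] ..
  also have "\<dots> = phi_minus_root (Node ts) * phi t"
    unfolding phi_minus_root_def phi_def char_poly_def
    by (rule det_four_block_mat_upper_right_zero) (use K P in \<open>auto simp: mat_delete_def\<close>)
  finally show ?thesis .
qed

lemma phi_minus_root_tjoin: "phi_minus_root (tjoin T m S) = phi_minus_root T * phi S ^ m"
proof (induction m)
  case (Suc m)
  obtain ts where T: "T = Node ts" by (cases T)
  have "tjoin T (Suc m) S = Node ((ts @ replicate m S) @ [S])"
    by (simp add: T replicate_append_same[symmetric])
  then show ?case
    using Suc phi_minus_root_snoc[of "ts @ replicate m S" S] by (simp add: T algebra_simps)
qed (cases T, simp)

lemma phi_tjoin: "phi (tjoin T m S) =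
   phi T * phi S ^ m - of_nat m * phi_minus_root T * phi_minus_root S * phi S ^ (m - 1)"
proof (induction m)
  case (Suc m)
  obtain ts where T: "T = Node ts" by (cases T)
  have "tjoin T (Suc m) S = Node ((ts @ replicate m S) @ [S])"
    by (simp add: T replicate_append_same[symmetric])
  then have "phi (tjoin T (Suc m) S) = phi (tjoin T m S) * phi S - phi_minus_root (tjoin T m S) * phi_minus_root S"
    using phi_snoc[of "ts @ replicate m S" S] by (simp only: T tjoin.simps)
  then show ?case
    unfolding Suc phi_minus_root_tjoin by (cases m) (simp_all add: algebra_simps)
qed (cases T, simp)

lemma phi_tjoin_relation:
  assumes rel: "phi S * phi T = Q * phi_minus_root S * phi_minus_root T"
  shows "phi (tjoin T m S) * phi S = (Q - of_nat m) * phi_minus_root (tjoin T m S) * phi_minus_root S"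
proof (cases m)
  case (Suc k)
  have "phi (tjoin T m S) * phi S =
      phi S ^ m * (phi S * phi T) - of_nat m * phi_minus_root T * phi_minus_root S * phi S ^ m"
    unfolding phi_tjoin using Suc by (simp add: algebra_simps)
  then show ?thesis unfolding rel phi_minus_root_tjoin by (simp add: algebra_simps)
qed (use rel in \<open>cases T, simp add: algebra_simps\<close>)

lemma phi_tjoin_ratio:
  assumes rel: "phi S * phi T = Q * phi_minus_root S * phi_minus_root T"
  shows "phi (tjoin T m S) * Q = phi S ^ m * phi T * (Q - of_nat m)"
proof (cases m)
  case (Suc k)
  have "phi (tjoin T m S) * Q =
      phi S ^ m * phi T * Q - of_nat m * phi S ^ k * (Q * phi_minus_root S * phi_minus_root T)"
    unfolding phi_tjoin using Suc by (simp add: algebra_simps)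
  then show ?thesis unfolding rel[symmetric] using Suc by (simp add: algebra_simps)
qed (cases T, simp)

lemma x_squared_minus_of_nat: "([:- int c, 0, 1:] :: int poly) - of_nat m = [:- int (c + m), 0, 1:]"
  by (simp add: of_nat_poly)

lemma phi_Crev_relation:
  assumes "sorted_wrt (\<ge>) (b # l)"
  shows "phi (Crev (b # l)) * phi (Crev l) = [:- int b, 0, 1:] * phi_minus_root (Crev (b # l)) * phi_minus_root (Crev l)"
  using assms
proof (induction l arbitrary: b)
  case Nil
  \<comment> \<open>\<open>Crev [b]\<close> is a vertex joined to b copies of a vertex.\<close>
  have "phi (Node []) * phi (Node []) = [:- int 0, 0, 1:] * phi_minus_root (Node []) * phi_minus_root (Node [])"
    by (simp add: phi_leaf phi_minus_root_leaf)
  from phi_tjoin_relation[OF this, of b] show ?case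
    unfolding x_squared_minus_of_nat by (simp add: phi_leaf phi_minus_root_leaf)
next
  case (Cons c l)
  then have "c \<le> b" and "sorted_wrt (\<ge>) (c # l)" by auto
  from phi_tjoin_relation[OF Cons.IH[OF this(2)], of "b - c"] show ?case
    unfolding x_squared_minus_of_nat using \<open>c \<le> b\<close> by simp
qed

theorem lemma2:
  fixes r :: "nat \<Rightarrow> nat" and n :: nat
  assumes "n \<ge> 2"
    and "\<forall>i\<in>{1..n}. r i > 0"
    and "\<forall>i j. 1 \<le> i \<and> i < j \<and> j \<le> n \<longrightarrow> r i < r j"
  shows "phi (C (map r [1..<n+1])) * [:- int (r (n - 1)), 0, 1:]
       = phi (C (map r [1..<n])) ^ (r n - r (n - 1)) * phi (C (map r [1..<n - 1]))
         * [:- int (r n), 0, 1:]"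
proof -
  obtain k where n: "n = Suc (Suc k)" using assms(1) by (metis add_2_eq_Suc le_Suc_ex)
  define l where "l = rev (map r [1..<Suc k])"
  have "sorted_wrt (\<le>) (map r [1..<n])"
    by (rule sorted_wrt_map_mono[OF sorted_wrt_upt]) (use assms(3) n in \<open>auto intro: less_imp_le\<close>)
  then have "sorted_wrt (\<ge>) (rev (map r [1..<n]))"
    by (simp only: sorted_wrt_rev)
  moreover have rev_n: "rev (map r [1..<n]) = r (n - 1) # l"
    by (simp add: l_def n)
  ultimately have "sorted_wrt (\<ge>) (r (n - 1) # l)"
    by (simp only:)
  from phi_tjoin_ratio[OF phi_Crev_relation[OF this], of "r n - r (n - 1)"]
  have "phi (Crev (r n # r (n - 1) # l)) * [:- int (r (n - 1)), 0, 1:] =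
      phi (Crev (r (n - 1) # l)) ^ (r n - r (n - 1)) * phi (Crev l) * [:- int (r n), 0, 1:]"
    using assms(3)[rule_format, of "n - 1" n] n
    by (simp only: Crev.simps x_squared_minus_of_nat) simp
  moreover have "rev (map r [1..<n + 1]) = r n # r (n - 1) # l" "rev (map r [1..<n - 1]) = l"
    by (simp_all add: l_def n)
  ultimately show ?thesis
    unfolding C_def rev_n by simp
qed

end
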